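(* For all $s,s^*\in\mathbb R$, $$(s-s^* )\big(\mathrm{shrink}(s)-\mathrm{shrink}(s^* )\big)\ge\frac{|\mathrm{shrink}(s^* )|}{|\mathrm{shrink}(s^* )|+2}(s-s^* )^2\ge0,$$ and the first inequality holds with equality when $s=-\mathrm{sign}(s^* )$.
   Context: $\mathrm{shrink}(s):=\mathrm{sign}(s)\max\{|s|-1,0\}$ (soft-thresholding with threshold $1$). *)

theory Defs
  imports Complex_Main
begin

definition shrink :: "real \<Rightarrow> real" where
  "shrink s = sgn s * max (\<bar>s\<bar> - 1) 0"

end

theory Submission
  imports Defs
begin

(* Writing c = |shrink t|, the claim (s - t)(shrink s - shrink t) >= c/(c+2) (s - t)^2
   is cleared of its denominator and proved in the form
     (c + 2) (s - t)(shrink s - shrink t) >= c (s - t)^2.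
   shrink is piecewise linear (s - 1 above 1, 0 on [-1,1], s + 1 below -1) and odd, so
   it suffices to treat t > 1, where c = t - 1, by a case split on the piece containing s;
   t < -1 follows by oddness, and for |t| <= 1 we have c = 0 and the bound is plain
   monotonicity of shrink.  The equality case s = -sgn t is checked directly: for |t| > 1
   the point s = -sgn t lies in the dead zone, which is exactly where the bound is tight. *)

lemma shrink_piecewise:
  "shrink s = (if s \<ge> 1 then s - 1 else if s \<le> -1 then s + 1 else 0)"
  by (auto simp: shrink_def sgn_if)

lemma shrink_minus: "shrink (- s) = - shrink s"
  by (simp add: shrink_piecewise)

lemma shrink_bound_above_threshold:
  fixes s t :: real
  assumes "t > 1"
  shows "(\<bar>shrink t\<bar> + 2) * ((s - t) * (shrink s - shrink t)) \<ge> \<bar>shrink t\<bar> * (s - t)\<^sup>2"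
proof -
  have t: "\<bar>shrink t\<bar> = t - 1" "shrink t = t - 1"
    using assms by (auto simp: shrink_piecewise)
  consider "s \<ge> 1" | "-1 < s" "s < 1" | "s \<le> -1" by linarith
  then show ?thesis
  proof cases
    case 1
    then have "shrink s = s - 1" by (simp add: shrink_piecewise)
    moreover have "0 \<le> 2 * (s - t)\<^sup>2" by simp
    ultimately show ?thesis
      unfolding t using assms by (simp add: power2_eq_square algebra_simps)
  next
    case 2
    then have "shrink s = 0" by (simp add: shrink_piecewise)
    moreover have "(t - 1) * ((t - s) * (s + 1)) \<ge> 0"
      using 2 assms by (intro mult_nonneg_nonneg) auto
    ultimately show ?thesis
      unfolding t using assms by (simp add: power2_eq_square algebra_simps)
  next
    case 3
    then have "shrink s = s + 1" by (simp add: shrink_piecewise)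
    moreover have "(t - s) * (- (s + 1)) \<ge> 0"
      using 3 assms by (intro mult_nonneg_nonneg) auto
    ultimately show ?thesis
      unfolding t using assms by (simp add: power2_eq_square algebra_simps)
  qed
qed

text \<open>Inside the dead zone the bound degenerates to monotonicity of shrink.\<close>
lemma shrink_bound_dead_zone:
  fixes s t :: real
  assumes "\<bar>t\<bar> \<le> 1"
  shows "(\<bar>shrink t\<bar> + 2) * ((s - t) * (shrink s - shrink t)) \<ge> \<bar>shrink t\<bar> * (s - t)\<^sup>2"
proof -
  have "shrink t = 0" using assms by (auto simp: shrink_piecewise)
  moreover have "(s - t) * shrink s \<ge> 0"
    using assms by (auto simp: shrink_piecewise intro: mult_nonneg_nonneg mult_nonpos_nonpos)
  ultimately show ?thesis by simp
qed

lemma shrink_strong_monotone_cleared: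
  fixes s t :: real
  shows "(\<bar>shrink t\<bar> + 2) * ((s - t) * (shrink s - shrink t)) \<ge> \<bar>shrink t\<bar> * (s - t)\<^sup>2"
proof -
  consider "t > 1" | "t < -1" | "\<bar>t\<bar> \<le> 1" by linarith
  then show ?thesis
  proof cases
    case 1
    then show ?thesis by (rule shrink_bound_above_threshold)
  next
    case 2
    then have "(\<bar>shrink (- t)\<bar> + 2) * ((- s - - t) * (shrink (- s) - shrink (- t)))
                 \<ge> \<bar>shrink (- t)\<bar> * (- s - - t)\<^sup>2"
      by (intro shrink_bound_above_threshold) simp
    then show ?thesis
      unfolding shrink_minus by (simp add: power2_eq_square algebra_simps)
  next
    case 3
    then show ?thesis by (rule shrink_bound_dead_zone)
  qed
qed

text \<open>The bound is attained at s = -sgn t: shrink vanishes there, and for t > 1 both sides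
  equal (t - 1)(t + 1) (the mirror case t < -1 is symmetric; for |t| <= 1 both sides are 0).\<close>
lemma shrink_strong_monotone_tight:
  fixes t :: real
  shows "(- sgn t - t) * (shrink (- sgn t) - shrink t)
           = \<bar>shrink t\<bar> / (\<bar>shrink t\<bar> + 2) * (- sgn t - t)\<^sup>2"
proof -
  consider "t > 1" | "t < -1" | "\<bar>t\<bar> \<le> 1" by linarith
  then show ?thesis
  proof cases
    case 1
    then have pieces: "shrink t = t - 1" "sgn t = 1" "shrink (- 1) = 0"
      by (auto simp: shrink_piecewise)
    show ?thesis unfolding pieces using 1 by (simp add: power2_eq_square field_simps)
  next
    case 2
    then have pieces: "shrink t = t + 1" "sgn t = - 1" "shrink 1 = 0"
      by (auto simp: shrink_piecewise)
    show ?thesis unfolding pieces using 2 by (simp add: pieces power2_eq_square field_simps)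
  next
    case 3
    then have "shrink t = 0" "shrink (- sgn t) = 0"
      by (auto simp: shrink_piecewise sgn_if)
    then show ?thesis by simp
  qed
qed

theorem mainTheorem16:
  fixes s s_star :: real
  shows "(s - s_star) * (shrink s - shrink s_star)
           \<ge> \<bar>shrink s_star\<bar> / (\<bar>shrink s_star\<bar> + 2) * (s - s_star)\<^sup>2
       \<and> \<bar>shrink s_star\<bar> / (\<bar>shrink s_star\<bar> + 2) * (s - s_star)\<^sup>2 \<ge> 0
       \<and> (s = - sgn s_star \<longrightarrow>
            (s - s_star) * (shrink s - shrink s_star)
              = \<bar>shrink s_star\<bar> / (\<bar>shrink s_star\<bar> + 2) * (s - s_star)\<^sup>2)"
proof (intro conjI impI)
  have "\<bar>shrink s_star\<bar> + 2 > 0" by simp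
  then show "(s - s_star) * (shrink s - shrink s_star)
               \<ge> \<bar>shrink s_star\<bar> / (\<bar>shrink s_star\<bar> + 2) * (s - s_star)\<^sup>2"
    using shrink_strong_monotone_cleared[where s = s and t = s_star]
    by (simp add: divide_le_eq mult.commute)
  show "\<bar>shrink s_star\<bar> / (\<bar>shrink s_star\<bar> + 2) * (s - s_star)\<^sup>2 \<ge> 0"
    by simp
next
  assume "s = - sgn s_star"
  then show "(s - s_star) * (shrink s - shrink s_star)
               = \<bar>shrink s_star\<bar> / (\<bar>shrink s_star\<bar> + 2) * (s - s_star)\<^sup>2"
    using shrink_strong_monotone_tight[of s_star] by simp
qed

end
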